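(* Let $G$ be a finite simple graph with maximum degree $\Delta$. If the induced subgraph $G[\mathrm{core}(G)]$ has a proper $\Delta$-edge coloring, then $G$ has a matching that saturates every vertex of $\mathrm{core}(G)$.
   Context: $\mathrm{core}(G)$ is the set of vertices of $G$ of degree $\Delta$. A proper $\Delta$-edge coloring assigns one of $\Delta$ colors to each edge so that adjacent edges get different colors. *)

theory Defs
  imports Main
begin

definition simple_graph :: "'a set \<Rightarrow> 'a set set \<Rightarrow> bool" where
  "simple_graph V E \<longleftrightarrow> finite V \<and> (\<forall>e\<in>E. \<exists>u v. e = {u, v} \<and> u \<noteq> v \<and> u \<in> V \<and> v \<in> V)"

definition degree :: "'a set set \<Rightarrow> 'a \<Rightarrow> nat" where
  "degree E v = card {e\<in>E. v \<in> e}"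

definition max_degree :: "'a set \<Rightarrow> 'a set set \<Rightarrow> nat" where
  "max_degree V E = Max (degree E ` V)"

definition core :: "'a set \<Rightarrow> 'a set set \<Rightarrow> 'a set" where
  "core V E = {v\<in>V. degree E v = max_degree V E}"

definition induced_edges :: "'a set set \<Rightarrow> 'a set \<Rightarrow> 'a set set" where
  "induced_edges E S = {e\<in>E. e \<subseteq> S}"

definition proper_edge_coloring :: "'a set set \<Rightarrow> nat \<Rightarrow> ('a set \<Rightarrow> nat) \<Rightarrow> bool" where
  "proper_edge_coloring E k c \<longleftrightarrow>
     (\<forall>e\<in>E. c e < k) \<and>
     (\<forall>e\<in>E. \<forall>f\<in>E. e \<noteq> f \<and> e \<inter> f \<noteq> {} \<longrightarrow> c e \<noteq> c f)"

definition matching :: "'a set set \<Rightarrow> 'a set set \<Rightarrow> bool" where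
  "matching E M \<longleftrightarrow> M \<subseteq> E \<and> (\<forall>e\<in>M. \<forall>f\<in>M. e \<noteq> f \<longrightarrow> e \<inter> f = {})"

definition saturates :: "'a set set \<Rightarrow> 'a set \<Rightarrow> bool" where
  "saturates M S \<longleftrightarrow> (\<forall>v\<in>S. \<exists>e\<in>M. v \<in> e)"

end

theory Submission
  imports Defs
begin

(* Tutte-type criterion: a graph has a matching saturating a vertex set S if, for every set X
   of vertices, at most |X| odd components of G - X lie inside S.  Take X maximal with equality:
   by Hall's theorem X can be matched into distinct odd components inside S, these components
   stay factor-critical by maximality of X, and induction handles all components of G - X.

   For S = core(G) the criterion is an edge count.  An odd component K of G - X inside the core
   has all degrees equal to Delta, while each of the Delta colour classes of G[K] is a matching of
   the odd set K and so has at most (|K| - 1)/2 edges; hence at least Delta edges leave K, all of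
   them ending in X, and X meets at most Delta |X| edges. *)

section \<open>Connected components of induced subgraphs\<close>

definition adjacent_in :: "'a set set \<Rightarrow> 'a set \<Rightarrow> 'a rel" where
  "adjacent_in E W = {(u, v). u \<in> W \<and> v \<in> W \<and> {u, v} \<in> E}"

definition component :: "'a set set \<Rightarrow> 'a set \<Rightarrow> 'a \<Rightarrow> 'a set" where
  "component E W v = (adjacent_in E W)\<^sup>* `` {v}"

definition components :: "'a set set \<Rightarrow> 'a set \<Rightarrow> 'a set set" where
  "components E W = component E W ` W"

definition separated :: "'a set set \<Rightarrow> 'a set \<Rightarrow> 'a set \<Rightarrow> bool" where
  "separated E A B \<longleftrightarrow> (\<forall>a\<in>A. \<forall>b\<in>B. {a, b} \<notin> E)"

definition odd_components_within :: "'a set set \<Rightarrow> 'a set \<Rightarrow> 'a set \<Rightarrow> 'a set set" where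
  "odd_components_within E W S = {K \<in> components E W. odd (card K) \<and> K \<subseteq> S}"

lemma separated_commute: "separated E A B \<longleftrightarrow> separated E B A"
  unfolding separated_def by (metis doubleton_eq_iff)

lemma separated_mono: "separated E A B \<Longrightarrow> A' \<subseteq> A \<Longrightarrow> B' \<subseteq> B \<Longrightarrow> separated E A' B'"
  by (auto simp: separated_def)

lemma equiv_rtrancl_adjacent_in: "equiv UNIV ((adjacent_in E W)\<^sup>*)"
proof -
  have "sym (adjacent_in E W)"
    by (auto simp: sym_def adjacent_in_def insert_commute)
  then show ?thesis
    by (simp add: equiv_def refl_rtrancl sym_rtrancl trans_rtrancl)
qed

lemma component_eq: "u \<in> component E W v \<Longrightarrow> component E W u = component E W v"
  unfolding component_def using equiv_rtrancl_adjacent_in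
  by (metis Image_singleton_iff equiv_class_eq)

lemma self_in_component: "v \<in> component E W v"
  by (simp add: component_def)

lemma component_subset: "v \<in> W \<Longrightarrow> component E W v \<subseteq> W"
proof
  fix u assume "v \<in> W" "u \<in> component E W v"
  then have "(v, u) \<in> (adjacent_in E W)\<^sup>*" "v \<in> W"
    by (auto simp: component_def)
  then show "u \<in> W"
    by (induction rule: rtrancl_induct) (auto simp: adjacent_in_def)
qed

lemma components_subset: "K \<in> components E W \<Longrightarrow> K \<subseteq> W"
  by (auto simp: components_def dest: component_subset)

lemma components_nonempty: "K \<in> components E W \<Longrightarrow> K \<noteq> {}"
  using self_in_component by (fastforce simp: components_def)

lemma components_eq_component: "K \<in> components E W \<Longrightarrow> v \<in> K \<Longrightarrow> K = component E W v"
  by (auto simp: components_def dest: component_eq)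

lemma components_disjoint:
  "K \<in> components E W \<Longrightarrow> L \<in> components E W \<Longrightarrow> K \<noteq> L \<Longrightarrow> K \<inter> L = {}"
  by (metis components_eq_component disjoint_iff)

lemma Union_components: "\<Union>(components E W) = W"
  using components_subset self_in_component by (fastforce simp: components_def)

lemma finite_components: "finite W \<Longrightarrow> finite (components E W)"
  by (simp add: components_def)

lemma separated_component: "K \<in> components E W \<Longrightarrow> separated E K (W - K)"
proof (unfold separated_def, intro ballI notI)
  fix a b assume K: "K \<in> components E W" and "a \<in> K" "b \<in> W - K" "{a, b} \<in> E"
  moreover have "a \<in> W"
    using K \<open>a \<in> K\<close> components_subset by blast
  ultimately have "(a, b) \<in> adjacent_in E W"
    by (simp add: adjacent_in_def)
  then have "b \<in> component E W a"
    by (simp add: component_def r_into_rtrancl)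
  moreover have "K = component E W a"
    using K \<open>a \<in> K\<close> by (rule components_eq_component)
  ultimately show False
    using \<open>b \<in> W - K\<close> by simp
qed

lemma rtrancl_adjacent_in_separated:
  assumes "(v, u) \<in> (adjacent_in E W)\<^sup>*" "v \<in> A" "separated E A (W - A)"
  shows "u \<in> A \<and> (v, u) \<in> (adjacent_in E A)\<^sup>*"
  using assms(1)
proof (induction rule: rtrancl_induct)
  case base
  then show ?case using assms(2) by simp
next
  case (step y z)
  then have "y \<in> A" "z \<in> W" "{y, z} \<in> E"
    by (simp_all add: adjacent_in_def)
  then have "z \<in> A"
    using assms(3) unfolding separated_def by blast
  with \<open>y \<in> A\<close> \<open>{y, z} \<in> E\<close> have "(y, z) \<in> adjacent_in E A"
    by (simp add: adjacent_in_def)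
  with step.IH \<open>z \<in> A\<close> show ?case
    by (meson rtrancl.rtrancl_into_rtrancl)
qed

lemma component_separated:
  assumes "A \<subseteq> W" "separated E A (W - A)" "v \<in> A"
  shows "component E W v = component E A v"
proof
  show "component E W v \<subseteq> component E A v"
  proof
    fix u assume "u \<in> component E W v"
    then have "(v, u) \<in> (adjacent_in E W)\<^sup>*"
      by (simp add: component_def)
    then show "u \<in> component E A v"
      using rtrancl_adjacent_in_separated[OF _ assms(3,2)] by (simp add: component_def)
  qed
  have "adjacent_in E A \<subseteq> adjacent_in E W"
    using assms(1) unfolding adjacent_in_def by blast
  then show "component E A v \<subseteq> component E W v"
    unfolding component_def by (intro Image_mono rtrancl_mono) simp_all
qed

lemma components_Un:
  assumes "A \<inter> B = {}" "separated E A B"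
  shows "components E (A \<union> B) = components E A \<union> components E B"
proof -
  have sepA: "separated E A (A \<union> B - A)"
    by (rule separated_mono[OF assms(2)]) auto
  from assms(2) have "separated E B A"
    by (simp only: separated_commute)
  then have sepB: "separated E B (A \<union> B - B)"
    by (rule separated_mono) (use assms(1) in auto)
  have "component E (A \<union> B) ` A = component E A ` A"
    using component_separated[OF _ sepA] by (intro image_cong) auto
  moreover have "component E (A \<union> B) ` B = component E B ` B"
    using component_separated[OF _ sepB] by (intro image_cong) auto
  ultimately show ?thesis
    by (simp add: components_def image_Un)
qed

lemma components_of_component:
  assumes K: "K \<in> components E W"
  shows "components E K = {K}"
proof -
  have "component E K v = K" if "v \<in> K" for v
    using component_separated[OF components_subset[OF K] separated_component[OF K] that]
      components_eq_component[OF K that] by simp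
  then have "components E K = (\<lambda>_. K) ` K"
    unfolding components_def by (rule image_cong[OF refl])
  then show ?thesis
    using components_nonempty[OF K] by (simp add: image_constant_conv)
qed

lemma separated_Un_right: "separated E A (B \<union> C) \<longleftrightarrow> separated E A B \<and> separated E A C"
  by (auto simp: separated_def)

lemma components_Diff_separated:
  assumes "D \<in> components E (W - X)" "Y \<subseteq> X" "separated E D (X - Y)"
  shows "D \<in> components E (W - Y)"
proof -
  define R where "R = W - Y - D"
  have "D \<subseteq> W - X"
    using assms(1) by (rule components_subset)
  then have "W - Y = D \<union> R" "D \<inter> R = {}"
    using assms(2) by (auto simp: R_def)
  moreover have "separated E D (W - X - D \<union> (X - Y))"
    using separated_component[OF assms(1)] assms(3) by (simp add: separated_Un_right)
  then have "separated E D R"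
    by (rule separated_mono) (auto simp: R_def)
  ultimately have "components E (W - Y) = components E D \<union> components E R"
    by (simp add: components_Un)
  then show ?thesis
    by (simp add: components_of_component[OF assms(1)])
qed

lemma finite_odd_components_within: "finite W \<Longrightarrow> finite (odd_components_within E W S)"
  by (simp add: odd_components_within_def finite_components)

lemma odd_components_within_Int:
  "W \<subseteq> D \<Longrightarrow> odd_components_within E W (S \<inter> D) = odd_components_within E W S"
  by (auto simp: odd_components_within_def dest: components_subset)

lemma card_odd_components_within_Un:
  assumes "finite A" "finite B" "A \<inter> B = {}" "separated E A B"
  shows "card (odd_components_within E (A \<union> B) S)
       = card (odd_components_within E A S) + card (odd_components_within E B S)"
proof -
  have "components E A \<inter> components E B = {}"
  proof (intro equals0I)
    fix K assume "K \<in> components E A \<inter> components E B"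
    then have "K \<subseteq> A" "K \<subseteq> B" "K \<noteq> {}"
      by (auto dest: components_subset components_nonempty)
    with assms(3) show False by blast
  qed
  then have "odd_components_within E (A \<union> B) S
      = odd_components_within E A S \<union> odd_components_within E B S"
    "odd_components_within E A S \<inter> odd_components_within E B S = {}"
    by (auto simp: odd_components_within_def components_Un[OF assms(3,4)])
  then show ?thesis
    by (simp add: card_Un_disjoint finite_odd_components_within assms(1,2))
qed

lemma card_odd_components_within_Diff:
  assumes "finite W" "D \<in> components E W" "T \<subseteq> D"
  shows "card (odd_components_within E (W - T) S) + (if odd (card D) \<and> D \<subseteq> S then 1 else 0)
       = card (odd_components_within E W S) + card (odd_components_within E (D - T) S)"
proof -
  define R where "R = W - D"
  have "D \<subseteq> W"
    using assms(2) by (rule components_subset)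
  then have W: "W = D \<union> R" "W - T = (D - T) \<union> R" "finite D" "finite R"
    using assms(1,3) by (auto simp: R_def intro: finite_subset)
  have sep: "separated E D R"
    using separated_component[OF assms(2)] by (simp add: R_def)
  then have "separated E (D - T) R"
    by (rule separated_mono) auto
  then have "card (odd_components_within E (W - T) S)
      = card (odd_components_within E (D - T) S) + card (odd_components_within E R S)"
    unfolding W(2) using W(3,4) by (intro card_odd_components_within_Un) (auto simp: R_def)
  moreover have "card (odd_components_within E W S)
      = card (odd_components_within E D S) + card (odd_components_within E R S)"
    unfolding W(1) using W(3,4) sep by (intro card_odd_components_within_Un) (auto simp: R_def)
  moreover have "odd_components_within E D S = (if odd (card D) \<and> D \<subseteq> S then {D} else {})"
    by (auto simp: odd_components_within_def components_of_component[OF assms(2)])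
  ultimately show ?thesis
    by simp
qed

lemma card_eq_sum_card_components:
  assumes "finite W"
  shows "card W = (\<Sum>K\<in>components E W. card K)"
proof -
  have "pairwise disjnt (components E W)"
    unfolding pairwise_def disjnt_def using components_disjoint by blast
  moreover have "finite K" if "K \<in> components E W" for K
    using components_subset[OF that] assms by (rule finite_subset)
  ultimately have "card (\<Union>(components E W)) = (\<Sum>K\<in>components E W. card K)"
    by (rule card_Union_disjoint)
  then show ?thesis
    by (simp add: Union_components)
qed

lemma even_card_odd_components_within:
  assumes "finite W" "W \<subseteq> S"
  shows "even (card (odd_components_within E W S)) \<longleftrightarrow> even (card W)"
proof -
  have "odd_components_within E W S = {K \<in> components E W. odd (card K)}"
    using assms(2) by (auto simp: odd_components_within_def dest: components_subset)
  then show ?thesis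
    using even_sum_iff[OF finite_components[OF assms(1)], of card E]
    unfolding card_eq_sum_card_components[OF assms(1), of E] by simp
qed

section \<open>Hall's theorem\<close>

definition hall_condition :: "('i \<Rightarrow> 'b set) \<Rightarrow> 'i set \<Rightarrow> bool" where
  "hall_condition A I \<longleftrightarrow> (\<forall>J\<subseteq>I. card J \<le> card (\<Union>(A ` J)))"

lemma distinct_representatives_Un:
  assumes "inj_on f J" "\<forall>i\<in>J. f i \<in> A i \<inter> U" "inj_on g K" "\<forall>i\<in>K. g i \<in> A i - U"
  shows "\<exists>h. inj_on h (J \<union> K) \<and> (\<forall>i\<in>J \<union> K. h i \<in> A i)"
proof -
  define h where "h i = (if i \<in> J then f i else g i)" for i
  have "inj_on h J" "inj_on h (K - J)"
    using assms(1,3) by (auto simp: h_def inj_on_def)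
  moreover have "h ` J \<inter> h ` (K - J) = {}"
    using assms(2,4) by (auto simp: h_def)
  moreover have "J - (K - J) = J" "K - J - J = K - J"
    by auto
  ultimately have "inj_on h (J \<union> (K - J))"
    by (subst inj_on_Un) simp
  then have "inj_on h (J \<union> K)"
    by simp
  moreover have "\<forall>i\<in>J \<union> K. h i \<in> A i"
    using assms(2,4) by (auto simp: h_def)
  ultimately show ?thesis
    by blast
qed

lemma hall_condition_Diff_critical:
  assumes "finite I" "\<And>i. i \<in> I \<Longrightarrow> finite (A i)" "hall_condition A I"
    and J: "J \<subseteq> I" "card (\<Union>(A ` J)) = card J"
  shows "hall_condition (\<lambda>i. A i - \<Union>(A ` J)) (I - J)"
proof (unfold hall_condition_def, intro allI impI)
  fix K assume K: "K \<subseteq> I - J"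
  let ?U = "\<Union>(A ` J)"
  have "finite K" "finite J"
    using K J(1) assms(1) by (auto intro: finite_subset)
  have "finite ?U" "finite (\<Union>(A ` K))"
    using K J(1) \<open>finite K\<close> \<open>finite J\<close> assms(2) by auto
  then have "finite (\<Union>i\<in>K. A i - ?U)"
    by (meson Diff_subset SUP_mono finite_subset)
  have "K \<union> J \<subseteq> I"
    using K J(1) by blast
  have "card K + card J = card (K \<union> J)"
    using K \<open>finite K\<close> \<open>finite J\<close> by (intro card_Un_disjoint[symmetric]) auto
  also have "\<dots> \<le> card (\<Union>(A ` (K \<union> J)))"
    using assms(3) \<open>K \<union> J \<subseteq> I\<close> unfolding hall_condition_def by blast
  also have "\<Union>(A ` (K \<union> J)) = (\<Union>i\<in>K. A i - ?U) \<union> ?U"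
    by blast
  also have "card \<dots> = card (\<Union>i\<in>K. A i - ?U) + card ?U"
    using \<open>finite ?U\<close> \<open>finite (\<Union>i\<in>K. A i - ?U)\<close> by (intro card_Un_disjoint) auto
  finally show "card K \<le> card (\<Union>((\<lambda>i. A i - ?U) ` K))"
    using J(2) by simp
qed

lemma hall_condition_remove:
  assumes "hall_condition A I"
    and not_critical: "\<And>J. J \<subseteq> I \<Longrightarrow> J \<noteq> {} \<Longrightarrow> J \<noteq> I \<Longrightarrow> card (\<Union>(A ` J)) \<noteq> card J"
    and "i0 \<in> I"
  shows "hall_condition (\<lambda>i. A i - {a}) (I - {i0})"
proof (unfold hall_condition_def, intro allI impI)
  fix K assume K: "K \<subseteq> I - {i0}"
  show "card K \<le> card (\<Union>((\<lambda>i. A i - {a}) ` K))"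
  proof (cases "K = {}")
    case False
    have "K \<subseteq> I" "K \<noteq> I"
      using K \<open>i0 \<in> I\<close> by auto
    then have "card K < card (\<Union>(A ` K))"
      using assms(1) not_critical[OF _ False] by (simp add: hall_condition_def le_neq_implies_less)
    moreover have "(\<Union>i\<in>K. A i - {a}) = \<Union>(A ` K) - {a}"
      by blast
    ultimately show ?thesis
      by (auto simp: card_Diff_singleton_if)
  qed simp
qed

lemma hall_condition_nonempty:
  assumes "hall_condition A I" "i \<in> I"
  shows "A i \<noteq> {}"
proof -
  have "{i} \<subseteq> I"
    using assms(2) by simp
  then have "card {i} \<le> card (\<Union>(A ` {i}))"
    using assms(1) by (simp only: hall_condition_def)
  then show ?thesis
    by auto
qed

theorem hall_marriage:
  fixes A :: "'i \<Rightarrow> 'b set"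
  assumes "finite I" "\<And>i. i \<in> I \<Longrightarrow> finite (A i)" "hall_condition A I"
  shows "\<exists>f. inj_on f I \<and> (\<forall>i\<in>I. f i \<in> A i)"
  using assms
proof (induction "card I" arbitrary: I A rule: less_induct)
  case less
  have IH: "\<exists>f. inj_on f I' \<and> (\<forall>i\<in>I'. f i \<in> A' i)"
    if "I' \<subset> I" "\<And>i. i \<in> I' \<Longrightarrow> finite (A' i)" "hall_condition A' I'"
    for I' and A' :: "'i \<Rightarrow> 'b set"
    by (rule less.hyps[OF psubset_card_mono[OF less.prems(1) that(1)]
          finite_subset[OF psubset_imp_subset[OF that(1)] less.prems(1)]]) (simp_all add: that(2,3))
  show ?case
  proof (cases "\<exists>J. J \<subseteq> I \<and> J \<noteq> {} \<and> J \<noteq> I \<and> card (\<Union>(A ` J)) = card J")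
    case True
    then obtain J where J: "J \<subseteq> I" "J \<noteq> {}" "J \<noteq> I" "card (\<Union>(A ` J)) = card J"
      by blast
    have "J \<subset> I" "I - J \<subset> I"
      using J(1-3) by blast+
    have "hall_condition A J"
      using less.prems(3) J(1) by (auto simp: hall_condition_def)
    have "\<exists>f. inj_on f J \<and> (\<forall>i\<in>J. f i \<in> A i)"
      by (rule IH[OF \<open>J \<subset> I\<close> _ \<open>hall_condition A J\<close>]) (use J(1) less.prems(2) in blast)
    then obtain f where f: "inj_on f J" "\<forall>i\<in>J. f i \<in> A i \<inter> \<Union>(A ` J)"
      by blast
    have "\<exists>g. inj_on g (I - J) \<and> (\<forall>i\<in>I - J. g i \<in> A i - \<Union>(A ` J))"
      by (rule IH[OF \<open>I - J \<subset> I\<close> _ hall_condition_Diff_critical[OF less.prems J(1,4)]])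
        (use less.prems(2) in blast)
    then obtain g where g: "inj_on g (I - J)" "\<forall>i\<in>I - J. g i \<in> A i - \<Union>(A ` J)"
      by blast
    from distinct_representatives_Un[OF f g] J(1) show ?thesis
      by (simp add: Un_absorb1)
  next
    case not_critical: False
    show ?thesis
    proof (cases "I = {}")
      case False
      then obtain i0 a where "i0 \<in> I" "a \<in> A i0"
        using hall_condition_nonempty[OF less.prems(3)] by blast
      have "I - {i0} \<subset> I"
        using \<open>i0 \<in> I\<close> by blast
      have hall_rest: "hall_condition (\<lambda>i. A i - {a}) (I - {i0})"
        by (rule hall_condition_remove[OF less.prems(3) _ \<open>i0 \<in> I\<close>]) (use not_critical in blast)
      have "\<exists>g. inj_on g (I - {i0}) \<and> (\<forall>i\<in>I - {i0}. g i \<in> A i - {a})"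
        by (rule IH[OF \<open>I - {i0} \<subset> I\<close> _ hall_rest]) (use less.prems(2) in blast)
      then obtain g where g: "inj_on g (I - {i0})" "\<forall>i\<in>I - {i0}. g i \<in> A i - {a}"
        by blast
      have "inj_on (\<lambda>_. a) {i0}" "\<forall>i\<in>{i0}. a \<in> A i \<inter> {a}"
        using \<open>a \<in> A i0\<close> by simp_all
      from distinct_representatives_Un[OF this g] \<open>i0 \<in> I\<close> show ?thesis
        by (simp add: insert_absorb)
    qed simp
  qed
qed

section \<open>Matchings saturating a vertex set\<close>

definition tutte_condition :: "'a set set \<Rightarrow> 'a set \<Rightarrow> 'a set \<Rightarrow> bool" where
  "tutte_condition E W S \<longleftrightarrow>
     S \<subseteq> W \<and> (\<forall>X\<subseteq>W. card (odd_components_within E (W - X) S) \<le> card X)"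

definition barrier :: "'a set set \<Rightarrow> 'a set \<Rightarrow> 'a set \<Rightarrow> 'a set \<Rightarrow> bool" where
  "barrier E W S X \<longleftrightarrow> X \<subseteq> W \<and> card (odd_components_within E (W - X) S) = card X"

lemma tutte_conditionD:
  "tutte_condition E W S \<Longrightarrow> X \<subseteq> W \<Longrightarrow> card (odd_components_within E (W - X) S) \<le> card X"
  by (simp add: tutte_condition_def)

lemma barrier_empty: "tutte_condition E W S \<Longrightarrow> barrier E W S {}"
  using tutte_conditionD[of E W S "{}"] by (simp add: barrier_def)

lemma tutte_condition_remove_vertex:
  assumes "finite W" "tutte_condition E W S" "t \<in> W - S"
    and no_barrier: "\<And>Y. barrier E W S Y \<Longrightarrow> Y = {}"
  shows "tutte_condition E (W - {t}) S"
proof (unfold tutte_condition_def, intro conjI allI impI)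
  show "S \<subseteq> W - {t}"
    using assms(2,3) by (auto simp: tutte_condition_def)
  fix Y assume Y: "Y \<subseteq> W - {t}"
  then have tY: "insert t Y \<subseteq> W" "W - {t} - Y = W - insert t Y"
    using assms(3) by auto
  have "finite Y"
    using Y assms(1) by (meson finite_Diff finite_subset)
  with Y have "card (insert t Y) = Suc (card Y)"
    by (intro card_insert_disjoint) auto
  moreover have "card (odd_components_within E (W - insert t Y) S) \<noteq> card (insert t Y)"
    using no_barrier[of "insert t Y"] tY(1) by (auto simp: barrier_def)
  moreover have "card (odd_components_within E (W - insert t Y) S) \<le> card (insert t Y)"
    using tutte_conditionD[OF assms(2) tY(1)] .
  ultimately show "card (odd_components_within E (W - {t} - Y) S) \<le> card Y"
    by (simp add: tY(2))
qed

lemma barrier_singleton: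
  assumes "finite W" "tutte_condition E W S" "W \<subseteq> S" "v \<in> W"
  shows "barrier E W S {v}"
proof -
  have "card (odd_components_within E W S) = 0"
    using tutte_conditionD[OF assms(2), of "{}"] by simp
  then have "even (card W)"
    using even_card_odd_components_within[OF assms(1,3), of E] by simp
  moreover have "card (W - {v}) = card W - 1" "card W > 0"
    using assms(1,4) by (auto simp: card_gt_0_iff)
  ultimately have "odd (card (W - {v}))"
    by simp
  then have "odd (card (odd_components_within E (W - {v}) S))"
    using even_card_odd_components_within[of "W - {v}" S E] assms(1,3) by auto
  moreover have "card (odd_components_within E (W - {v}) S) \<le> 1"
    using tutte_conditionD[OF assms(2), of "{v}"] assms(4) by simp
  ultimately show ?thesis
    using assms(4) by (auto simp: barrier_def le_Suc_eq)
qed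

lemma card_odd_components_within_barrier_Un:
  assumes "finite W" "barrier E W S X" "D \<in> components E (W - X)" "T \<subseteq> D"
  shows "card (odd_components_within E (W - (X \<union> T)) S) + (if odd (card D) \<and> D \<subseteq> S then 1 else 0)
       = card X + card (odd_components_within E (D - T) S)"
proof -
  have "W - (X \<union> T) = W - X - T"
    by blast
  then show ?thesis
    using card_odd_components_within_Diff[OF finite_Diff[OF assms(1)] assms(3,4), of S] assms(2)
    by (simp add: barrier_def)
qed

lemma barrier_Un_subset_component:
  assumes "finite W" "barrier E W S X" "D \<in> components E (W - X)" "T \<subseteq> D"
  shows "X \<union> T \<subseteq> W" "card (X \<union> T) = card X + card T"
proof -
  have "D \<subseteq> W - X"
    using assms(3) by (rule components_subset)
  with assms(2,4) show "X \<union> T \<subseteq> W"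
    by (auto simp: barrier_def)
  with assms(1) \<open>D \<subseteq> W - X\<close> assms(4) show "card (X \<union> T) = card X + card T"
    by (intro card_Un_disjoint) (auto intro: finite_subset)
qed

lemma tutte_condition_component:
  assumes "finite W" "tutte_condition E W S" "barrier E W S X"
    and D: "D \<in> components E (W - X)" "\<not> (odd (card D) \<and> D \<subseteq> S)"
  shows "tutte_condition E D (S \<inter> D)"
proof (unfold tutte_condition_def, intro conjI allI impI)
  show "S \<inter> D \<subseteq> D"
    by blast
  fix T assume "T \<subseteq> D"
  note XT = barrier_Un_subset_component[OF assms(1,3) D(1) this]
  have "card X + card (odd_components_within E (D - T) S)
      = card (odd_components_within E (W - (X \<union> T)) S)"
    using card_odd_components_within_barrier_Un[OF assms(1,3) D(1) \<open>T \<subseteq> D\<close>] D(2) by simp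
  also have "\<dots> \<le> card X + card T"
    using tutte_conditionD[OF assms(2) XT(1)] XT(2) by simp
  finally show "card (odd_components_within E (D - T) (S \<inter> D)) \<le> card T"
    by (simp add: odd_components_within_Int[of "D - T" D])
qed

lemma tutte_condition_odd_component:
  assumes "finite W" "tutte_condition E W S" "barrier E W S X"
    and max: "\<And>Y. barrier E W S Y \<Longrightarrow> card Y \<le> card X"
    and D: "D \<in> odd_components_within E (W - X) S" and "v \<in> D"
  shows "tutte_condition E (D - {v}) (D - {v})"
proof (unfold tutte_condition_def, intro conjI allI impI)
  show "D - {v} \<subseteq> D - {v}" ..
  fix T assume T: "T \<subseteq> D - {v}"
  define Q where "Q = D - insert v T"
  have DC: "D \<in> components E (W - X)" and "odd (card D)" "D \<subseteq> S"
    using D by (auto simp: odd_components_within_def)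
  have "finite D"
    using components_subset[OF DC] assms(1) by (auto intro: finite_subset)
  have vT: "insert v T \<subseteq> D" "v \<notin> T" "finite T"
    using T \<open>v \<in> D\<close> \<open>finite D\<close> by (auto intro: finite_subset)
  note XvT = barrier_Un_subset_component[OF assms(1,3) DC vT(1)]
  have "D - {v} - T = Q" "Q \<subseteq> D - {v}" "S \<inter> (D - {v}) = D - {v}"
    using \<open>D \<subseteq> S\<close> by (auto simp: Q_def)
  then have odd_Q: "odd_components_within E (D - {v} - T) (D - {v}) = odd_components_within E Q S"
    using odd_components_within_Int[of Q "D - {v}" E S] by simp
  have "card Q = card D - Suc (card T)" "Suc (card T) \<le> card D"
    using vT \<open>finite D\<close> card_mono[OF \<open>finite D\<close> vT(1)] by (simp_all add: Q_def card_Diff_subset)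
  then have parity: "even (card (odd_components_within E Q S)) \<longleftrightarrow> even (card T)"
    using even_card_odd_components_within[of Q S E] \<open>finite D\<close> \<open>D \<subseteq> S\<close> \<open>odd (card D)\<close>
    by (auto simp: Q_def)
  (* Since card D is odd, a violating T would overshoot by two, and then X \<union> insert v T
     would be a barrier larger than X. *)
  show "card (odd_components_within E (D - {v} - T) (D - {v})) \<le> card T"
  proof (rule ccontr)
    assume "\<not> ?thesis"
    with odd_Q parity have "card T + 2 \<le> card (odd_components_within E Q S)"
      by presburger
    then have "barrier E W S (X \<union> insert v T)"
      using card_odd_components_within_barrier_Un[OF assms(1,3) DC vT(1)]
        tutte_conditionD[OF assms(2) XvT(1)] XvT \<open>odd (card D)\<close> \<open>D \<subseteq> S\<close>
      by (simp add: barrier_def Q_def vT(2,3))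
    then have "card (X \<union> insert v T) \<le> card X"
      by (rule max)
    with XvT(2) vT(2,3) show False
      by simp
  qed
qed

lemma card_le_card_neighbours_odd_components:
  assumes "finite W" "tutte_condition E W S" "X \<subseteq> W" "J \<subseteq> odd_components_within E (W - X) S"
  shows "card J \<le> card (\<Union>D\<in>J. {x \<in> X. \<exists>u\<in>D. {x, u} \<in> E})"
proof -
  define Y where "Y = (\<Union>D\<in>J. {x \<in> X. \<exists>u\<in>D. {x, u} \<in> E})"
  have "Y \<subseteq> X"
    by (auto simp: Y_def)
  have "D \<in> odd_components_within E (W - Y) S" if "D \<in> J" for D
  proof -
    have DC: "D \<in> components E (W - X)" and "odd (card D)" "D \<subseteq> S"
      using that assms(4) by (auto simp: odd_components_within_def)
    have "separated E D (X - Y)"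
      unfolding separated_def
    proof (intro ballI notI)
      fix a b assume "a \<in> D" "b \<in> X - Y" "{a, b} \<in> E"
      then have "{b, a} \<in> E"
        by (simp add: insert_commute)
      with that \<open>a \<in> D\<close> \<open>b \<in> X - Y\<close> show False
        by (auto simp: Y_def)
    qed
    with \<open>odd (card D)\<close> \<open>D \<subseteq> S\<close> show ?thesis
      using components_Diff_separated[OF DC \<open>Y \<subseteq> X\<close>] by (simp add: odd_components_within_def)
  qed
  then have "card J \<le> card (odd_components_within E (W - Y) S)"
    using assms(1) by (intro card_mono) (auto simp: finite_odd_components_within)
  also have "\<dots> \<le> card Y"
    using tutte_conditionD[OF assms(2)] \<open>Y \<subseteq> X\<close> assms(3) by simp
  finally show ?thesis
    by (simp add: Y_def)
qed

lemma matching_insert: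
  assumes "matching E M" "e \<in> E" "e \<inter> \<Union>M = {}"
  shows "matching E (insert e M)"
  using assms unfolding matching_def by blast

lemma near_perfect_matching_insert_edge:
  assumes "matching E N" "\<Union>N \<subseteq> D - {u}" "saturates N (D - {u})"
    and "u \<in> D" "p \<notin> D" "{p, u} \<in> E"
  shows "matching E (insert {p, u} N) \<and> \<Union>(insert {p, u} N) \<subseteq> insert p D
       \<and> saturates (insert {p, u} N) (insert p D)"
proof (intro conjI)
  show "matching E (insert {p, u} N)"
    using assms(2,5) by (intro matching_insert[OF assms(1,6)]) auto
  show "\<Union>(insert {p, u} N) \<subseteq> insert p D"
    using assms(2,4) by auto
  show "saturates (insert {p, u} N) (insert p D)"
    using assms(3) by (auto simp: saturates_def)
qed

lemma saturates_mono: "saturates M T \<Longrightarrow> S \<subseteq> T \<Longrightarrow> saturates M S"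
  by (auto simp: saturates_def)

lemma matching_UN:
  assumes "\<And>i. i \<in> I \<Longrightarrow> matching E (N i)" "\<And>i. i \<in> I \<Longrightarrow> \<Union>(N i) \<subseteq> R i"
    and disjoint: "\<And>i j. i \<in> I \<Longrightarrow> j \<in> I \<Longrightarrow> i \<noteq> j \<Longrightarrow> R i \<inter> R j = {}"
  shows "matching E (\<Union>i\<in>I. N i)"
  unfolding matching_def
proof (intro conjI ballI impI)
  show "(\<Union>i\<in>I. N i) \<subseteq> E"
    using assms(1) by (simp add: matching_def UN_least)
  fix e f assume "e \<in> (\<Union>i\<in>I. N i)" "f \<in> (\<Union>i\<in>I. N i)" "e \<noteq> f"
  then obtain i j where ij: "i \<in> I" "e \<in> N i" "j \<in> I" "f \<in> N j"
    by blast
  show "e \<inter> f = {}"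
  proof (cases "i = j")
    case True
    with ij assms(1)[of i] \<open>e \<noteq> f\<close> show ?thesis
      by (auto simp: matching_def)
  next
    case False
    have "e \<subseteq> R i" "f \<subseteq> R j"
      using ij assms(2) by blast+
    with disjoint[OF ij(1,3) False] show ?thesis
      by blast
  qed
qed

lemma saturates_UN:
  assumes "\<And>i. i \<in> I \<Longrightarrow> saturates (N i) (S \<inter> R i)" "S \<subseteq> (\<Union>i\<in>I. R i)"
  shows "saturates (\<Union>i\<in>I. N i) S"
  unfolding saturates_def
proof
  fix v assume "v \<in> S"
  with assms(2) obtain i where "i \<in> I" "v \<in> R i"
    by blast
  with assms(1)[of i] \<open>v \<in> S\<close> show "\<exists>e\<in>(\<Union>i\<in>I. N i). v \<in> e"
    unfolding saturates_def by blast
qed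

lemma barrier_matched_to_odd_components:
  assumes "finite W" "tutte_condition E W S" "barrier E W S X"
  shows "\<exists>f. bij_betw f (odd_components_within E (W - X) S) X \<and>
             (\<forall>D\<in>odd_components_within E (W - X) S. \<exists>u\<in>D. {f D, u} \<in> E)"
proof -
  let ?I = "odd_components_within E (W - X) S"
  define A where "A D = {x \<in> X. \<exists>u\<in>D. {x, u} \<in> E}" for D
  have "X \<subseteq> W" "card ?I = card X"
    using assms(3) by (simp_all add: barrier_def)
  have "finite X"
    using \<open>X \<subseteq> W\<close> assms(1) by (rule finite_subset)
  have "hall_condition A ?I"
    unfolding hall_condition_def A_def
    using card_le_card_neighbours_odd_components[OF assms(1,2) \<open>X \<subseteq> W\<close>] by blast
  moreover have "finite ?I" "\<And>D. finite (A D)"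
    using assms(1) \<open>finite X\<close> by (simp_all add: finite_odd_components_within A_def)
  ultimately obtain f where f: "inj_on f ?I" "\<forall>D\<in>?I. f D \<in> A D"
    using hall_marriage[of ?I A] by blast
  then have "f ` ?I \<subseteq> X"
    by (auto simp: A_def)
  moreover have "card (f ` ?I) = card X"
    using card_image[OF f(1)] \<open>card ?I = card X\<close> by simp
  ultimately have "f ` ?I = X"
    using card_subset_eq[OF \<open>finite X\<close>] by blast
  with f show ?thesis
    by (auto simp: bij_betw_def A_def)
qed

lemma components_with_partners_partition:
  assumes "X \<subseteq> W" "I \<subseteq> components E (W - X)" "bij_betw f I X"
  defines "R \<equiv> \<lambda>D. if D \<in> I then insert (f D) D else D"
  shows "\<And>D D'. D \<in> components E (W - X) \<Longrightarrow> D' \<in> components E (W - X) \<Longrightarrow> D \<noteq> D'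
           \<Longrightarrow> R D \<inter> R D' = {}"
    and "(\<Union>D\<in>components E (W - X). R D) = W"
proof -
  have fI: "f ` I = X" "inj_on f I"
    using assms(3) by (simp_all add: bij_betw_def)
  fix D D' assume D: "D \<in> components E (W - X)" "D' \<in> components E (W - X)" "D \<noteq> D'"
  have "D \<inter> D' = {}" "D \<inter> X = {}" "D' \<inter> X = {}"
    using components_disjoint[OF D] components_subset[OF D(1)] components_subset[OF D(2)]
    by auto
  with fI D(3) show "R D \<inter> R D' = {}"
    by (auto simp: R_def inj_on_def)
next
  have "(\<Union>D\<in>components E (W - X). R D) = \<Union>(components E (W - X)) \<union> f ` I"
    using assms(2) by (auto simp: R_def)
  also have "\<dots> = W"
    using assms(1,3) by (auto simp: Union_components bij_betw_def)
  finally show "(\<Union>D\<in>components E (W - X). R D) = W" .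
qed

lemma saturating_matching_from_components:
  assumes "X \<subseteq> W" "S \<subseteq> W" "I \<subseteq> components E (W - X)" "bij_betw f I X"
    and odd_comps: "\<And>D. D \<in> I
        \<Longrightarrow> \<exists>N. matching E N \<and> \<Union>N \<subseteq> insert (f D) D \<and> saturates N (insert (f D) D)"
    and other_comps: "\<And>D. D \<in> components E (W - X) - I
        \<Longrightarrow> \<exists>N. matching E N \<and> \<Union>N \<subseteq> D \<and> saturates N (S \<inter> D)"
  shows "\<exists>M. matching E M \<and> \<Union>M \<subseteq> W \<and> saturates M S"
proof -
  let ?C = "components E (W - X)"
  define R where "R \<equiv> \<lambda>D. if D \<in> I then insert (f D) D else D"
  have "\<forall>D\<in>?C. \<exists>N. matching E N \<and> \<Union>N \<subseteq> R D \<and> saturates N (S \<inter> R D)"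
  proof
    fix D assume "D \<in> ?C"
    show "\<exists>N. matching E N \<and> \<Union>N \<subseteq> R D \<and> saturates N (S \<inter> R D)"
    proof (cases "D \<in> I")
      case True
      with odd_comps obtain N
        where N: "matching E N" "\<Union>N \<subseteq> insert (f D) D" "saturates N (insert (f D) D)"
        by blast
      have "saturates N (S \<inter> R D)"
        by (rule saturates_mono[OF N(3)]) (simp add: R_def True)
      with N(1,2) True show ?thesis
        by (auto simp: R_def)
    next
      case False
      with other_comps \<open>D \<in> ?C\<close> show ?thesis
        by (simp add: R_def)
    qed
  qed
  then obtain N where N: "\<forall>D\<in>?C. matching E (N D) \<and> \<Union>(N D) \<subseteq> R D \<and> saturates (N D) (S \<inter> R D)"
    by (rule bchoice[THEN exE])
  note partition = components_with_partners_partition[OF assms(1,3,4)]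
  have disjoint: "R D \<inter> R D' = {}" if "D \<in> ?C" "D' \<in> ?C" "D \<noteq> D'" for D D'
    unfolding R_def by (rule partition(1)[OF that])
  have "matching E (\<Union>D\<in>?C. N D)"
    using N by (intro matching_UN[OF _ _ disjoint]) auto
  moreover have cover: "(\<Union>D\<in>?C. R D) = W"
    unfolding R_def by (rule partition(2))
  with N have "\<Union>(\<Union>D\<in>?C. N D) \<subseteq> W"
    by blast
  moreover have "saturates (\<Union>D\<in>?C. N D) S"
    using N assms(2) cover by (intro saturates_UN) auto
  ultimately show ?thesis
    by blast
qed

lemma saturating_matching_barrier_step:
  assumes "finite W" "tutte_condition E W S" "barrier E W S X" "X \<noteq> {}"
    and max: "\<And>Y. barrier E W S Y \<Longrightarrow> card Y \<le> card X"
    and IH: "\<And>W' S'. W' \<subset> W \<Longrightarrow> tutte_condition E W' S'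
               \<Longrightarrow> \<exists>M. matching E M \<and> \<Union>M \<subseteq> W' \<and> saturates M S'"
  shows "\<exists>M. matching E M \<and> \<Union>M \<subseteq> W \<and> saturates M S"
proof -
  let ?C = "components E (W - X)"
  let ?I = "odd_components_within E (W - X) S"
  have "X \<subseteq> W" "S \<subseteq> W"
    using assms(2,3) by (simp_all add: barrier_def tutte_condition_def)
  have "?I \<subseteq> ?C"
    by (auto simp: odd_components_within_def)
  obtain f where f: "bij_betw f ?I X" "\<forall>D\<in>?I. \<exists>u\<in>D. {f D, u} \<in> E"
    using barrier_matched_to_odd_components[OF assms(1-3)] by blast
  have DW: "D \<subseteq> W - X" "D \<subset> W" if "D \<in> ?C" for D
    using components_subset[OF that] \<open>X \<subseteq> W\<close> \<open>X \<noteq> {}\<close> by auto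
  show ?thesis
  proof (rule saturating_matching_from_components[OF \<open>X \<subseteq> W\<close> \<open>S \<subseteq> W\<close> \<open>?I \<subseteq> ?C\<close> f(1)])
    fix D assume D: "D \<in> ?I"
    obtain u where u: "u \<in> D" "{f D, u} \<in> E"
      using f(2) D by blast
    have "D - {u} \<subset> W"
      using DW(2) D \<open>?I \<subseteq> ?C\<close> by blast
    moreover have "tutte_condition E (D - {u}) (D - {u})"
      by (rule tutte_condition_odd_component[OF assms(1-3) max D u(1)])
    ultimately have "\<exists>N. matching E N \<and> \<Union>N \<subseteq> D - {u} \<and> saturates N (D - {u})"
      by (rule IH)
    then obtain N where N: "matching E N" "\<Union>N \<subseteq> D - {u}" "saturates N (D - {u})"
      by blast
    have "f D \<in> X" "D \<subseteq> W - X"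
      using bij_betwE[OF f(1)] D DW(1) \<open>?I \<subseteq> ?C\<close> by blast+
    then have "f D \<notin> D"
      by blast
    from near_perfect_matching_insert_edge[OF N u(1) this u(2)]
    show "\<exists>N. matching E N \<and> \<Union>N \<subseteq> insert (f D) D \<and> saturates N (insert (f D) D)"
      by blast
  next
    fix D assume D: "D \<in> ?C - ?I"
    then have "tutte_condition E D (S \<inter> D)"
      using tutte_condition_component[OF assms(1-3)] by (simp add: odd_components_within_def)
    with D show "\<exists>N. matching E N \<and> \<Union>N \<subseteq> D \<and> saturates N (S \<inter> D)"
      using IH DW(2) by blast
  qed
qed

lemma saturating_matching_no_barrier_step:
  assumes "finite W" "tutte_condition E W S"
    and no_barrier: "\<And>Y. barrier E W S Y \<Longrightarrow> Y = {}"
    and IH: "\<And>W' S'. W' \<subset> W \<Longrightarrow> tutte_condition E W' S'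
               \<Longrightarrow> \<exists>M. matching E M \<and> \<Union>M \<subseteq> W' \<and> saturates M S'"
  shows "\<exists>M. matching E M \<and> \<Union>M \<subseteq> W \<and> saturates M S"
proof (cases "W \<subseteq> S")
  case True
  have "W = {}"
  proof (rule ccontr)
    assume "W \<noteq> {}"
    then obtain v where "v \<in> W"
      by blast
    from no_barrier[OF barrier_singleton[OF assms(1,2) True this]] show False
      by simp
  qed
  with assms(2) show ?thesis
    by (auto simp: tutte_condition_def matching_def saturates_def)
next
  case False
  then obtain t where t: "t \<in> W - S"
    by blast
  have "W - {t} \<subset> W"
    using t by blast
  moreover have "tutte_condition E (W - {t}) S"
    by (rule tutte_condition_remove_vertex[OF assms(1,2) t no_barrier])
  ultimately have "\<exists>M. matching E M \<and> \<Union>M \<subseteq> W - {t} \<and> saturates M S"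
    by (rule IH)
  then show ?thesis
    by blast
qed

theorem saturating_matching_if_tutte_condition:
  assumes "finite W" "tutte_condition E W S"
  shows "\<exists>M. matching E M \<and> \<Union>M \<subseteq> W \<and> saturates M S"
  using assms
proof (induction "card W" arbitrary: W S rule: less_induct)
  case less
  have IH: "\<exists>M. matching E M \<and> \<Union>M \<subseteq> W' \<and> saturates M S'"
    if "W' \<subset> W" "tutte_condition E W' S'" for W' S'
    by (rule less.hyps[OF psubset_card_mono[OF less.prems(1) that(1)]
          finite_subset[OF psubset_imp_subset[OF that(1)] less.prems(1)] that(2)])
  have "\<forall>Y. barrier E W S Y \<longrightarrow> card Y < Suc (card W)"
    using card_mono[OF less.prems(1)] by (simp add: barrier_def le_imp_less_Suc)
  from ex_has_greatest_nat[OF barrier_empty[OF less.prems(2)] this]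
  obtain X where X: "barrier E W S X" and max: "\<And>Y. barrier E W S Y \<Longrightarrow> card Y \<le> card X"
    by blast
  show ?case
  proof (cases "X = {}")
    case True
    have "Y = {}" if "barrier E W S Y" for Y
    proof -
      have "card Y = 0" "Y \<subseteq> W"
        using max[OF that] True that by (simp_all add: barrier_def)
      with less.prems(1) show ?thesis
        by (meson card_0_eq finite_subset)
    qed
    then show ?thesis
      by (rule saturating_matching_no_barrier_step[OF less.prems _ IH])
  next
    case False
    show ?thesis
      by (rule saturating_matching_barrier_step[OF less.prems X False max IH])
  qed
qed

section \<open>Edges leaving odd components of the core\<close>

definition edge_boundary :: "'a set set \<Rightarrow> 'a set \<Rightarrow> 'a set set" where
  "edge_boundary E K = {e \<in> E. e \<inter> K \<noteq> {} \<and> \<not> e \<subseteq> K}"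

lemma simple_graph_finite_edges:
  assumes "simple_graph V E"
  shows "finite E"
proof (rule finite_subset)
  show "E \<subseteq> Pow V"
    using assms by (auto simp: simple_graph_def)
  show "finite (Pow V)"
    using assms by (simp add: simple_graph_def)
qed

lemma simple_graph_card_edge: "simple_graph V E \<Longrightarrow> e \<in> E \<Longrightarrow> card e = 2"
  by (auto simp: simple_graph_def)

lemma card_Int_edge_boundary:
  assumes "card e = 2" "e \<inter> K \<noteq> {}" "\<not> e \<subseteq> K"
  shows "card (e \<inter> K) = 1"
proof -
  have "finite e"
    using assms(1) by (simp add: card_ge_0_finite)
  then have "card (e \<inter> K) < card e" "0 < card (e \<inter> K)"
    using assms(2,3) by (auto intro: psubset_card_mono simp: card_gt_0_iff)
  with assms(1) show ?thesis
    by simp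
qed

lemma sum_degree_eq:
  assumes "simple_graph V E" "finite K"
  shows "(\<Sum>v\<in>K. degree E v) = 2 * card (induced_edges E K) + card (edge_boundary E K)"
proof -
  have "finite E"
    using assms(1) by (rule simple_graph_finite_edges)
  have "(\<Sum>v\<in>K. degree E v) = (\<Sum>e\<in>E. card {v \<in> K. v \<in> e})"
    unfolding degree_def by (rule sum_multicount_gen[OF assms(2) \<open>finite E\<close>]) simp
  also have "\<dots> = (\<Sum>e\<in>induced_edges E K \<union> edge_boundary E K. card (e \<inter> K))"
  proof (rule sum.mono_neutral_cong_right[OF \<open>finite E\<close>])
    show "induced_edges E K \<union> edge_boundary E K \<subseteq> E"
      by (auto simp: induced_edges_def edge_boundary_def)
    show "\<forall>e\<in>E - (induced_edges E K \<union> edge_boundary E K). card {v \<in> K. v \<in> e} = 0"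
    proof
      fix e assume e: "e \<in> E - (induced_edges E K \<union> edge_boundary E K)"
      have "{v \<in> K. v \<in> e} = {}"
        using e unfolding induced_edges_def edge_boundary_def by blast
      then show "card {v \<in> K. v \<in> e} = 0"
        by (simp only: card.empty)
    qed
    show "card {v \<in> K. v \<in> e} = card (e \<inter> K)" for e
      by (simp add: Collect_conj_eq Int_commute Collect_mem_eq)
  qed
  also have "\<dots> = (\<Sum>e\<in>induced_edges E K. card (e \<inter> K)) + (\<Sum>e\<in>edge_boundary E K. card (e \<inter> K))"
    using \<open>finite E\<close> by (intro sum.union_disjoint) (auto simp: induced_edges_def edge_boundary_def)
  also have "(\<Sum>e\<in>induced_edges E K. card (e \<inter> K)) = (\<Sum>e\<in>induced_edges E K. 2)"
    using simple_graph_card_edge[OF assms(1)]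
    by (intro sum.cong) (auto simp: induced_edges_def Int_absorb2)
  also have "(\<Sum>e\<in>edge_boundary E K. card (e \<inter> K)) = (\<Sum>e\<in>edge_boundary E K. 1)"
    using simple_graph_card_edge[OF assms(1)] card_Int_edge_boundary
    by (intro sum.cong) (auto simp: edge_boundary_def)
  finally show ?thesis
    by simp
qed

lemma card_matching_within_odd_set:
  assumes "finite K" "odd (card K)" "\<forall>e\<in>F. e \<subseteq> K \<and> card e = 2"
    and disjoint: "\<forall>e\<in>F. \<forall>f\<in>F. e \<noteq> f \<longrightarrow> e \<inter> f = {}"
  shows "2 * card F \<le> card K - 1"
proof -
  have "finite F"
    using assms(1,3) by (meson Pow_iff finite_Pow_iff finite_subset subsetI)
  have "finite e" if "e \<in> F" for e
    using that assms(1,3) finite_subset by blast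
  then have "card (\<Union>F) = (\<Sum>e\<in>F. card e)"
    using disjoint by (intro card_Union_disjoint) (auto simp: pairwise_def disjnt_def)
  also have "\<dots> = 2 * card F"
    using assms(3) by simp
  finally have "card (\<Union>F) = 2 * card F" .
  moreover have "card (\<Union>F) \<le> card K"
    using assms(1,3) by (intro card_mono) auto
  ultimately show ?thesis
    using assms(2) by presburger
qed

lemma card_induced_edges_odd_le:
  assumes "simple_graph V E" "proper_edge_coloring (induced_edges E C) d c"
    and K: "K \<subseteq> C" "finite K" "odd (card K)"
  shows "2 * card (induced_edges E K) \<le> d * (card K - 1)"
proof -
  let ?F = "induced_edges E K"
  define colour_class where "colour_class i = {e \<in> ?F. c e = i}" for i
  have "?F \<subseteq> induced_edges E C"
    using K(1) by (auto simp: induced_edges_def)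
  with assms(2) have colours: "\<forall>e\<in>?F. c e < d"
    and proper: "\<forall>e\<in>?F. \<forall>f\<in>?F. e \<noteq> f \<and> e \<inter> f \<noteq> {} \<longrightarrow> c e \<noteq> c f"
    unfolding proper_edge_coloring_def by blast+
  have class_bound: "2 * card (colour_class i) \<le> card K - 1" for i
  proof (rule card_matching_within_odd_set[OF K(2,3)])
    show "\<forall>e\<in>colour_class i. e \<subseteq> K \<and> card e = 2"
      using simple_graph_card_edge[OF assms(1)] by (auto simp: colour_class_def induced_edges_def)
    show "\<forall>e\<in>colour_class i. \<forall>f\<in>colour_class i. e \<noteq> f \<longrightarrow> e \<inter> f = {}"
      using proper unfolding colour_class_def by blast
  qed
  have "?F = (\<Union>i<d. colour_class i)"
    using colours by (auto simp: colour_class_def)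
  then have "2 * card ?F \<le> 2 * (\<Sum>i<d. card (colour_class i))"
    using card_UN_le[of "{..<d}" colour_class] by simp
  also have "\<dots> = (\<Sum>i<d. 2 * card (colour_class i))"
    by (simp add: sum_distrib_left)
  also have "\<dots> \<le> (\<Sum>i<d. card K - 1)"
    using class_bound by (intro sum_mono)
  finally show ?thesis
    by simp
qed

lemma card_edge_boundary_ge:
  assumes "simple_graph V E" "proper_edge_coloring (induced_edges E C) d c"
    and K: "K \<subseteq> C" "finite K" "odd (card K)" and deg: "\<forall>v\<in>K. degree E v = d"
  shows "d \<le> card (edge_boundary E K)"
proof -
  have "card K * d = 2 * card (induced_edges E K) + card (edge_boundary E K)"
    using sum_degree_eq[OF assms(1) K(2)] deg by simp
  moreover have "2 * card (induced_edges E K) \<le> d * (card K - 1)"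
    by (rule card_induced_edges_odd_le[OF assms(1,2) K])
  moreover have "card K \<ge> 1"
    using K(3) by (cases "card K") auto
  then have "card K * d = d * (card K - 1) + d"
    by (simp add: algebra_simps)
  ultimately show ?thesis
    by linarith
qed

lemma edge_boundary_component:
  assumes "simple_graph V E" "K \<in> components E (V - X)" "e \<in> edge_boundary E K"
  shows "\<exists>a b. e = {a, b} \<and> a \<in> K \<and> b \<in> X"
proof -
  have "e \<in> E" "e \<inter> K \<noteq> {}" "\<not> e \<subseteq> K"
    using assms(3) by (simp_all add: edge_boundary_def)
  then obtain x y where xy: "e = {x, y}" "x \<in> V" "y \<in> V"
    using assms(1) unfolding simple_graph_def by blast
  obtain a b where e: "e = {a, b}" "a \<in> K" "b \<notin> K" "b \<in> V"
  proof (cases "x \<in> K")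
    case True
    with xy \<open>\<not> e \<subseteq> K\<close> have "y \<notin> K"
      by simp
    with True xy that show ?thesis
      by blast
  next
    case False
    with xy \<open>e \<inter> K \<noteq> {}\<close> have "y \<in> K"
      by auto
    moreover have "e = {y, x}"
      using xy(1) by (simp add: insert_commute)
    ultimately show ?thesis
      using False xy(2) that by blast
  qed
  have "b \<in> X"
  proof (rule ccontr)
    assume "b \<notin> X"
    with e have "b \<in> V - X - K"
      by blast
    with separated_component[OF assms(2)] e(1,2) assms(3) show False
      by (auto simp: separated_def edge_boundary_def)
  qed
  with e show ?thesis
    by blast
qed

lemma edge_boundary_component_subset:
  assumes "simple_graph V E" "K \<in> components E (V - X)"
  shows "edge_boundary E K \<subseteq> (\<Union>x\<in>X. {e \<in> E. x \<in> e})"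
proof
  fix e assume e: "e \<in> edge_boundary E K"
  then obtain a b where "e = {a, b}" "b \<in> X"
    using edge_boundary_component[OF assms] by blast
  moreover have "e \<in> E"
    using e by (simp add: edge_boundary_def)
  ultimately show "e \<in> (\<Union>x\<in>X. {e \<in> E. x \<in> e})"
    by blast
qed

lemma edge_boundary_components_disjoint:
  assumes "simple_graph V E" "K \<in> components E (V - X)" "K' \<in> components E (V - X)" "K \<noteq> K'"
  shows "edge_boundary E K \<inter> edge_boundary E K' = {}"
proof (rule equals0I)
  fix e assume e: "e \<in> edge_boundary E K \<inter> edge_boundary E K'"
  then obtain a b where "e = {a, b}" "a \<in> K" "b \<in> X"
    using edge_boundary_component[OF assms(1,2)] by blast
  moreover have "b \<notin> K'"
    using components_subset[OF assms(3)] \<open>b \<in> X\<close> by blast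
  moreover have "e \<inter> K' \<noteq> {}"
    using e by (simp add: edge_boundary_def)
  ultimately have "a \<in> K'"
    by blast
  with components_disjoint[OF assms(2-4)] \<open>a \<in> K\<close> show False
    by blast
qed

lemma card_odd_components_within_core_le:
  assumes "simple_graph V E" "0 < d" "\<forall>v\<in>V. degree E v \<le> d" "\<forall>v\<in>C. degree E v = d"
    and col: "proper_edge_coloring (induced_edges E C) d c" and "X \<subseteq> V"
  shows "card (odd_components_within E (V - X) C) \<le> card X"
proof -
  let ?O = "odd_components_within E (V - X) C"
  have "finite V" "finite E"
    using assms(1) simple_graph_finite_edges by (auto simp: simple_graph_def)
  then have "finite ?O" "finite X"
    using assms(6) by (auto simp: finite_odd_components_within intro: finite_subset)
  have K: "K \<in> components E (V - X)" "K \<subseteq> C" "odd (card K)" "finite K" if "K \<in> ?O" for K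
    using that components_subset[of K E "V - X"] \<open>finite V\<close>
    by (auto simp: odd_components_within_def intro: finite_subset)
  have "d \<le> card (edge_boundary E K)" if "K \<in> ?O" for K
    using card_edge_boundary_ge[OF assms(1) col K(2,4,3)[OF that]] K(2)[OF that] assms(4) by blast
  then have "card ?O * d \<le> (\<Sum>K\<in>?O. card (edge_boundary E K))"
    using sum_bounded_below[of ?O d "\<lambda>K. card (edge_boundary E K)"] by simp
  also have "\<dots> = card (\<Union>K\<in>?O. edge_boundary E K)"
    using \<open>finite ?O\<close> \<open>finite E\<close> edge_boundary_components_disjoint[OF assms(1) K(1) K(1)]
    by (intro card_UN_disjoint[symmetric]) (auto simp: edge_boundary_def)
  also have "\<dots> \<le> card (\<Union>x\<in>X. {e \<in> E. x \<in> e})"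
    using edge_boundary_component_subset[OF assms(1) K(1)] \<open>finite X\<close> \<open>finite E\<close>
    by (intro card_mono) auto
  also have "\<dots> \<le> (\<Sum>x\<in>X. degree E x)"
    unfolding degree_def by (rule card_UN_le[OF \<open>finite X\<close>])
  also have "\<dots> \<le> card X * d"
    using sum_bounded_above[of X "degree E" d] assms(3,6) by auto
  finally show ?thesis
    using assms(2) by simp
qed

lemma degree_le_max_degree: "finite V \<Longrightarrow> v \<in> V \<Longrightarrow> degree E v \<le> max_degree V E"
  by (simp add: max_degree_def)

lemma max_degree_pos:
  assumes "simple_graph V E" "E \<noteq> {}"
  shows "0 < max_degree V E"
proof -
  obtain e where "e \<in> E"
    using assms(2) by blast
  then obtain a b where "{a, b} \<in> E" "a \<in> V"
    using assms(1) unfolding simple_graph_def by metis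
  then have "{e \<in> E. a \<in> e} \<noteq> {}"
    by blast
  then have "0 < degree E a"
    using simple_graph_finite_edges[OF assms(1)] by (simp add: degree_def card_gt_0_iff)
  also have "\<dots> \<le> max_degree V E"
    using assms(1) \<open>a \<in> V\<close> by (simp add: degree_le_max_degree simple_graph_def)
  finally show ?thesis .
qed

theorem theorem5p2:
  fixes V :: "'a set" and E :: "'a set set"
  assumes "simple_graph V E"
    and "E \<noteq> {}"
    and "\<exists>c. proper_edge_coloring (induced_edges E (core V E)) (max_degree V E) c"
  shows "\<exists>M. matching E M \<and> saturates M (core V E)"
proof -
  obtain c where c: "proper_edge_coloring (induced_edges E (core V E)) (max_degree V E) c"
    using assms(3) by blast
  have "finite V"
    using assms(1) by (simp add: simple_graph_def)
  have "\<forall>v\<in>V. degree E v \<le> max_degree V E" "\<forall>v\<in>core V E. degree E v = max_degree V E"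
    using degree_le_max_degree[OF \<open>finite V\<close>] by (simp_all add: core_def)
  note odd_components_bound =
    card_odd_components_within_core_le[OF assms(1) max_degree_pos[OF assms(1,2)] this c]
  have "core V E \<subseteq> V"
    by (simp add: core_def)
  with odd_components_bound have "tutte_condition E V (core V E)"
    by (simp add: tutte_condition_def)
  then obtain M where "matching E M" "saturates M (core V E)"
    using saturating_matching_if_tutte_condition[OF \<open>finite V\<close>] by blast
  then show ?thesis
    by blast
qed

end
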